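(* Let $r\ge1$ and $t,s\ge0$ be integers. For every $\mathbf{u}=(u_1,\dots,u_r)\in\mathbb{Z}_+^r$ with $u_i\ge s+1$ for all $i\in\{1,\dots,r\}$, we have $|\mathcal{A}_{t,s}(\mathbf{u})|=A_{t,s}(r)$.
   Context: For $\mathbf{u}\in\mathbb{Z}_+^r$ (positive integers), $\mathcal{A}_{t,s}(\mathbf{u})=\{\mathbf{v}\in\mathbb{Z}_+^r:\ \sum_{i=1}^r\max\{0,u_i-v_i\}\le s,\ \sum_{i=1}^r\max\{0,v_i-u_i\}\le t\}$. The numbers $A_{t,s}(r)$ (integers $t,s$, $r\ge1$) are defined by: $A_{t,s}(r)=0$ if $t<0$ or $s<0$; $A_{t,s}(1)=t+s+1$ for $t,s\ge0$; for $r\ge2$, $t,s\ge0$: $A_{t,s}(r)=\sum_{i=1}^{t}A_{t-i,s}(r-1)+\sum_{i=1}^{s}A_{t,s-i}(r-1)+A_{t,s}(r-1)$. *)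

theory Defs
  imports Main
begin

text \<open>Vectors in Z_+^r are represented as integer lists of length r with positive entries.\<close>

definition Aset :: "int \<Rightarrow> int \<Rightarrow> int list \<Rightarrow> int list set" where
  "Aset t s u = {v. length v = length u \<and> (\<forall>i<length v. v ! i > 0) \<and>
      (\<Sum>i<length u. max 0 (u ! i - v ! i)) \<le> s \<and>
      (\<Sum>i<length u. max 0 (v ! i - u ! i)) \<le> t}"

fun Anum :: "int \<Rightarrow> int \<Rightarrow> nat \<Rightarrow> int" where
  "Anum t s 0 = 0"
| "Anum t s (Suc 0) = (if t < 0 \<or> s < 0 then 0 else t + s + 1)"
| "Anum t s (Suc (Suc n)) = (if t < 0 \<or> s < 0 then 0 else
      (\<Sum>i\<in>{1..t}. Anum (t - i) s (Suc n)) + (\<Sum>i\<in>{1..s}. Anum t (s - i) (Suc n))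
      + Anum t s (Suc n))"

end

theory Submission
  imports Defs
begin

text \<open>Write the first coordinate of \<open>v\<close> as \<open>u\<^sub>1 + d\<close>. Then \<open>-s \<le> d \<le> t\<close>, and \<open>d\<close> uses up
  \<open>max 0 d\<close> of the budget \<open>t\<close> and \<open>max 0 (-d)\<close> of the budget \<open>s\<close>. As \<open>u\<^sub>1 \<ge> s + 1\<close>, every such
  coordinate is positive, so the remaining coordinates range exactly over
  \<open>\<A>\<^bsub>t - max 0 d, s - max 0 (-d)\<^esub>(u\<^sub>2, \<dots>, u\<^sub>r)\<close>. Summing over \<open>d\<close> gives the defining recursion
  of \<open>A\<^bsub>t,s\<^esub>(r)\<close>, and induction on \<open>r\<close> finishes the proof.\<close>

text \<open>The recursion of \<open>Anum\<close>, extended down to \<open>r = 0\<close> (one empty vector) so that it holds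
  for every \<open>r \<ge> 1\<close>.\<close>

fun Acount :: "int \<Rightarrow> int \<Rightarrow> nat \<Rightarrow> int" where
  "Acount t s 0 = (if t < 0 \<or> s < 0 then 0 else 1)"
| "Acount t s (Suc n) = (if t < 0 \<or> s < 0 then 0 else
      (\<Sum>i\<in>{1..t}. Acount (t - i) s n) + (\<Sum>i\<in>{1..s}. Acount t (s - i) n) + Acount t s n)"

lemma Acount_eq_Anum: "Acount t s (Suc n) = Anum t s (Suc n)"
proof (induction n arbitrary: t s)
  case 0
  then show ?case by simp
next
  case (Suc n)
  then show ?case by (subst Acount.simps) (simp del: Acount.simps)
qed

lemma Aset_Nil: "Aset t s [] = (if t < 0 \<or> s < 0 then {} else {[]})"
  unfolding Aset_def by auto

lemma Aset_empty_if_negative: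
  assumes "t < 0 \<or> s < 0"
  shows "Aset t s u = {}"
proof (rule equals0I)
  fix v assume "v \<in> Aset t s u"
  moreover have "0 \<le> (\<Sum>i<length u. max 0 (u ! i - v ! i))" "0 \<le> (\<Sum>i<length u. max 0 (v ! i - u ! i))"
    by (simp_all add: sum_nonneg)
  ultimately show False using assms unfolding Aset_def by auto
qed

lemma finite_Aset: "finite (Aset t s u)"
proof (rule finite_subset)
  let ?M = "Max (insert 0 (set u)) + t"
  show "Aset t s u \<subseteq> {v. set v \<subseteq> {1..?M} \<and> length v = length u}"
  proof safe
    fix v assume v: "v \<in> Aset t s u"
    have bounds: "0 < v ! i \<and> v ! i \<le> ?M" if i: "i < length u" for i
    proof -
      have "v ! i - u ! i \<le> (\<Sum>j<length u. max 0 (v ! j - u ! j))"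
        using member_le_sum[of i "{..<length u}" "\<lambda>j. max 0 (v ! j - u ! j)"] i by simp
      also have "\<dots> \<le> t" using v unfolding Aset_def by simp
      finally have "v ! i \<le> u ! i + t" by simp
      moreover have "u ! i \<le> Max (insert 0 (set u))" using i by simp
      moreover have "0 < v ! i" using v i unfolding Aset_def by simp
      ultimately show ?thesis by simp
    qed
    show "length v = length u" using v unfolding Aset_def by simp
    show "x \<in> {1..?M}" if "x \<in> set v" for x
    proof -
      from that obtain i where "i < length u" "x = v ! i"
        using \<open>length v = length u\<close> by (auto simp: in_set_conv_nth)
      then have "0 < x" "x \<le> ?M" using bounds by auto
      then show ?thesis by simp
    qed
  qed
  show "finite {v. set v \<subseteq> {1..?M} \<and> length v = length u}"
    by (rule finite_lists_length_eq) simp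
qed

lemma Cons_mem_Aset_Cons_iff:
  "y # v \<in> Aset t s (x # u) \<longleftrightarrow>
     y > 0 \<and> v \<in> Aset (t - max 0 (y - x)) (s - max 0 (x - y)) u"
proof -
  have "(\<Sum>i<length (x # u). max 0 ((x # u) ! i - (y # v) ! i)) =
      (\<Sum>i<length u. max 0 (u ! i - v ! i)) + max 0 (x - y)"
   and "(\<Sum>i<length (x # u). max 0 ((y # v) ! i - (x # u) ! i)) =
      (\<Sum>i<length u. max 0 (v ! i - u ! i)) + max 0 (y - x)"
    by (simp_all only: length_Cons sum.lessThan_Suc_shift nth_Cons_0 nth_Cons_Suc add.commute)
  moreover have "(\<forall>i<length (y # v). (y # v) ! i > 0) \<longleftrightarrow> y > 0 \<and> (\<forall>i<length v. v ! i > 0)"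
    by (simp only: length_Cons All_less_Suc2 nth_Cons_0 nth_Cons_Suc)
  ultimately show ?thesis
    unfolding Aset_def mem_Collect_eq by (simp only: length_Cons Suc_inject le_diff_eq) blast
qed

lemma Aset_Cons:
  assumes "x > s"
  shows "Aset t s (x # u) =
    (\<Union>y\<in>{x - s..x + t}. Cons y ` Aset (t - max 0 (y - x)) (s - max 0 (x - y)) u)"
proof (intro set_eqI iffI)
  fix w assume w: "w \<in> Aset t s (x # u)"
  then obtain y v where "w = y # v" unfolding Aset_def by (cases w) auto
  moreover have v: "v \<in> Aset (t - max 0 (y - x)) (s - max 0 (x - y)) u"
    using w Cons_mem_Aset_Cons_iff unfolding \<open>w = y # v\<close> by blast
  moreover have "y \<in> {x - s..x + t}"
  proof -
    have "\<not> (t - max 0 (y - x) < 0 \<or> s - max 0 (x - y) < 0)"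
      using Aset_empty_if_negative v by blast
    then show ?thesis by auto
  qed
  ultimately show "w \<in> (\<Union>y\<in>{x - s..x + t}. Cons y ` Aset (t - max 0 (y - x)) (s - max 0 (x - y)) u)"
    by blast
next
  fix w assume "w \<in> (\<Union>y\<in>{x - s..x + t}. Cons y ` Aset (t - max 0 (y - x)) (s - max 0 (x - y)) u)"
  then obtain y v where "w = y # v" "y \<ge> x - s" "v \<in> Aset (t - max 0 (y - x)) (s - max 0 (x - y)) u"
    by auto
  then show "w \<in> Aset t s (x # u)" using assms Cons_mem_Aset_Cons_iff by simp
qed

lemma sum_int_interval_around_0:
  fixes t s :: int and f :: "int \<Rightarrow> 'a :: comm_monoid_add"
  assumes "t \<ge> 0" "s \<ge> 0"
  shows "(\<Sum>d\<in>{-s..t}. f d) = (\<Sum>i\<in>{1..t}. f i) + (\<Sum>i\<in>{1..s}. f (- i)) + f 0"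
proof -
  have "{-s..t} = ({1..t} \<union> {-s..-1}) \<union> {0}" using assms by auto
  then have "(\<Sum>d\<in>{-s..t}. f d) = (\<Sum>i\<in>{1..t}. f i) + (\<Sum>i\<in>{-s..-1}. f i) + f 0"
    by (simp add: sum.union_disjoint add_ac)
  moreover have "(\<Sum>i\<in>{-s..-1}. f i) = (\<Sum>i\<in>{1..s}. f (- i))"
    by (rule sum.reindex_bij_witness[of _ uminus uminus]) auto
  ultimately show ?thesis by simp
qed

lemma card_Aset:
  assumes "\<forall>x\<in>set u. x > s"
  shows "int (card (Aset t s u)) = Acount t s (length u)"
  using assms
proof (induction u arbitrary: t s)
  case Nil
  then show ?case by (simp add: Aset_Nil)
next
  case (Cons x u)
  show ?case
  proof (cases "t < 0 \<or> s < 0")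
    case True
    then show ?thesis by (simp add: Aset_empty_if_negative)
  next
    case False
    then have "t \<ge> 0" "s \<ge> 0" by auto
    let ?A = "\<lambda>y. Aset (t - max 0 (y - x)) (s - max 0 (x - y)) u"
    let ?C = "\<lambda>t s. Acount t s (length u)"
    have IH: "int (card (?A y)) = ?C (t - max 0 (y - x)) (s - max 0 (x - y))" for y
      using Cons.prems by (intro Cons.IH) force
    have "x > s" using Cons.prems by simp
    have "card (Aset t s (x # u)) = (\<Sum>y\<in>{x - s..x + t}. card (Cons y ` ?A y))"
      unfolding Aset_Cons[OF \<open>x > s\<close>]
      by (rule card_UN_disjoint) (auto simp: finite_Aset)
    also have "\<dots> = (\<Sum>y\<in>{x - s..x + t}. card (?A y))"
      by (simp add: card_image)
    finally have "int (card (Aset t s (x # u))) =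
        (\<Sum>y\<in>{x - s..x + t}. ?C (t - max 0 (y - x)) (s - max 0 (x - y)))"
      by (simp add: IH)
    also have "\<dots> = (\<Sum>d\<in>{-s..t}. ?C (t - max 0 d) (s - max 0 (- d)))"
      by (rule sum.reindex_bij_witness[of _ "\<lambda>d. x + d" "\<lambda>y. y - x"]) auto
    also have "\<dots> = (\<Sum>i\<in>{1..t}. ?C (t - i) s) + (\<Sum>i\<in>{1..s}. ?C t (s - i)) + ?C t s"
      unfolding sum_int_interval_around_0[OF \<open>t \<ge> 0\<close> \<open>s \<ge> 0\<close>]
      by (intro arg_cong2[where f = "(+)"] sum.cong) auto
    also have "\<dots> = Acount t s (length (x # u))" using \<open>t \<ge> 0\<close> \<open>s \<ge> 0\<close> by simp
    finally show ?thesis .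
  qed
qed

theorem lemma2:
  fixes r :: nat and t s :: int and u :: "int list"
  assumes "r \<ge> 1" and "t \<ge> 0" and "s \<ge> 0"
    and "length u = r" and "\<forall>i<r. u ! i \<ge> s + 1"
  shows "int (card (Aset t s u)) = Anum t s r"
proof -
  have "\<forall>x\<in>set u. x > s" using assms(4,5) by (fastforce simp: in_set_conv_nth)
  then have "int (card (Aset t s u)) = Acount t s r" using card_Aset assms(4) by blast
  also have "\<dots> = Anum t s r" using Acount_eq_Anum assms(1) by (cases r) auto
  finally show ?thesis .
qed

end
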